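(* Let $L$ be an $n\times n$ nonsingular M-matrix with integer entries. If $c\in\mathbb{Z}^n$ is a critical configuration of $L$, then $D^L-c$ is $z$-superstable with respect to $L$.
   Context: A Z-matrix is a square real matrix whose off-diagonal entries are all $\le 0$. A nonsingular M-matrix is a Z-matrix $L$ that is invertible with $L^{-1}$ having all entries nonnegative (its diagonal entries are then positive). Vector inequalities are entrywise; $e_i$ is the $i$th standard basis vector. A vector $f\in\mathbb{Z}^n$ with $f\ge0$ is $z$-superstable if for every $z\in\mathbb{Z}^n$ with $z\ge0$, $z\ne0$, there is $i$ with $f_i-(Lz)_i<0$. $D^L\in\mathbb{Z}^n$ is defined by $D^L_i=L_{ii}-1$. A vector $c\in\mathbb{Z}^n$ is stable if $c_i<L_{ii}$ for all $i$. A vector $c\in\mathbb{Z}^n$ is a critical configuration if it is stable and there exist $g\in\mathbb{Z}^n$ with $g_i\ge L_{ii}$ for all $i$ and indices $i_1,\dots,i_k$ such that $c=g-\sum_{j=1}^kLe_{i_j}$ and, writing $g^\ell=g-\sum_{j=1}^\ell Le_{i_j}$ ($g^0=g$), one has $g^\ell_{i_{\ell+1}}\ge L_{i_{\ell+1}i_{\ell+1}}$ for all $0\le\ell<k$. *)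

theory Defs
  imports "HOL-Analysis.Analysis"
begin

definition Z_matrix :: "int ^'n ^'n \<Rightarrow> bool" where
  "Z_matrix L \<longleftrightarrow> (\<forall>i j. i \<noteq> j \<longrightarrow> L $ i $ j \<le> 0)"

definition real_mat :: "int ^'n ^'n \<Rightarrow> real ^'n ^'n" where
  "real_mat L = (\<chi> i j. real_of_int (L $ i $ j))"

definition nonsingular_M_matrix :: "int ^'n::finite ^'n \<Rightarrow> bool" where
  "nonsingular_M_matrix L \<longleftrightarrow> Z_matrix L \<and> invertible (real_mat L)
     \<and> (\<forall>i j. matrix_inv (real_mat L) $ i $ j \<ge> 0)"

definition unitv :: "'n::finite \<Rightarrow> int ^'n" where
  "unitv i = (\<chi> j. if j = i then 1 else 0)"

definition D_L :: "int ^'n ^'n \<Rightarrow> int ^'n" where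
  "D_L L = (\<chi> i. L $ i $ i - 1)"

definition z_superstable :: "int ^'n::finite ^'n \<Rightarrow> int ^'n \<Rightarrow> bool" where
  "z_superstable L f \<longleftrightarrow> (\<forall>i. f $ i \<ge> 0) \<and>
     (\<forall>z::int^'n. (\<forall>i. z $ i \<ge> 0) \<and> z \<noteq> 0 \<longrightarrow> (\<exists>i. f $ i - (L *v z) $ i < 0))"

definition stable :: "int ^'n ^'n \<Rightarrow> int ^'n \<Rightarrow> bool" where
  "stable L c \<longleftrightarrow> (\<forall>i. c $ i < L $ i $ i)"

definition fire_seq :: "int ^'n::finite ^'n \<Rightarrow> int ^'n \<Rightarrow> 'n list \<Rightarrow> nat \<Rightarrow> int ^'n" where
  "fire_seq L g is l = g - (\<Sum>j<l. L *v unitv (is ! j))"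

definition critical :: "int ^'n::finite ^'n \<Rightarrow> int ^'n \<Rightarrow> bool" where
  "critical L c \<longleftrightarrow> stable L c \<and>
     (\<exists>g is. (\<forall>i. g $ i \<ge> L $ i $ i) \<and>
        c = fire_seq L g is (length is) \<and>
        (\<forall>l < length is. fire_seq L g is l $ (is ! l) \<ge> L $ (is ! l) $ (is ! l)))"

end

theory Submission
  imports Defs
begin

(* Write x for the firing vector of the legal sequence witnessing that c is
   critical, so that c = g - L x.  Suppose D^L - c - L z >= 0 for some integer
   z >= 0, z <> 0, and put y = x - z.  Then g - L y = c + L z is stable and
   L y = g - c - L z >= 1 entrywise, hence y >= 0 because L^{-1} >= 0.
   The least action principle for Z-matrices -- a legal firing sequence never
   fires a vertex more often than any y >= 0 that stabilises g -- now gives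
   x <= y = x - z, i.e. z <= 0, so z = 0: a contradiction. *)

lemma matrix_inv_left:
  fixes A :: "'a::semiring_1 ^'n ^'m"
  assumes "invertible A"
  shows "matrix_inv A ** A = mat 1"
  using someI_ex[OF assms[unfolded invertible_def]] unfolding matrix_inv_def by blast

lemma real_mat_mult_vec:
  "real_mat L *v (\<chi> i. real_of_int (y $ i)) = (\<chi> i. real_of_int ((L *v y) $ i))"
  by (simp add: real_mat_def matrix_vector_mult_def vec_eq_iff)

(* Inverse-positivity: for a nonsingular M-matrix, L y >= 0 forces y >= 0,
   since y = L^{-1} (L y) with L^{-1} entrywise nonnegative. *)
lemma M_matrix_inverse_positive:
  fixes L :: "int ^'n::finite ^'n"
  assumes M: "nonsingular_M_matrix L" and Ly: "\<And>i. (L *v y) $ i \<ge> 0"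
  shows "y $ i \<ge> 0"
proof -
  define A where "A = real_mat L"
  define ry where "ry = (\<chi> i. real_of_int (y $ i))"
  have inv: "invertible A" and nn: "\<And>i j. matrix_inv A $ i $ j \<ge> 0"
    using M unfolding nonsingular_M_matrix_def A_def by auto
  have "ry = matrix_inv A *v (A *v ry)"
    by (simp add: matrix_vector_mul_assoc matrix_inv_left[OF inv])
  also have "A *v ry = (\<chi> i. real_of_int ((L *v y) $ i))"
    unfolding A_def ry_def by (rule real_mat_mult_vec)
  finally have "ry $ i = (\<Sum>j\<in>UNIV. matrix_inv A $ i $ j * real_of_int ((L *v y) $ j))"
    by (simp add: matrix_vector_mult_def)
  also have "\<dots> \<ge> 0"
    by (rule sum_nonneg) (simp add: nn Ly)
  finally show ?thesis by (simp add: ry_def)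
qed

lemma Z_matrix_row_antimono:
  fixes L :: "int ^'n::finite ^'n"
  assumes Z: "Z_matrix L" and le: "\<And>u. a $ u \<le> b $ u" and eq: "a $ v = b $ v"
  shows "(L *v b) $ v \<le> (L *v a) $ v"
proof -
  have "(L *v b) $ v - (L *v a) $ v = (\<Sum>u\<in>UNIV. L $ v $ u * (b $ u - a $ u))"
    by (simp add: matrix_vector_mult_def sum_subtractf right_diff_distrib)
  also have "\<dots> \<le> 0"
  proof (rule sum_nonpos)
    fix u show "L $ v $ u * (b $ u - a $ u) \<le> 0"
      using Z le[of u] eq unfolding Z_matrix_def
      by (cases "u = v") (auto simp: mult_nonpos_nonneg)
  qed
  finally show ?thesis by simp
qed

definition firing_vector :: "'n::finite list \<Rightarrow> nat \<Rightarrow> int ^'n" where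
  "firing_vector is l = (\<Sum>j<l. unitv (is ! j))"

lemma firing_vector_Suc:
  "firing_vector is (Suc l) = firing_vector is l + unitv (is ! l)"
  by (simp add: firing_vector_def)

lemma fire_seq_firing_vector:
  "fire_seq L g is l = g - L *v firing_vector is l"
proof -
  have "(\<Sum>j<l. L *v unitv (is ! j)) = L *v firing_vector is l"
    by (induction l) (simp_all add: firing_vector_def matrix_vector_right_distrib)
  thus ?thesis unfolding fire_seq_def by simp
qed

(* Inductively, the first firing that
   would exceed y is at a vertex v with equal counts, and by Z-matrix
   monotonicity legality of that firing would make g - L y unstable at v. *)
lemma least_action:
  fixes L :: "int ^'n::finite ^'n"
  assumes Z: "Z_matrix L"
    and legal: "\<And>l. l < length is \<Longrightarrow> fire_seq L g is l $ (is ! l) \<ge> L $ (is ! l) $ (is ! l)"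
    and y_nonneg: "\<And>u. y $ u \<ge> 0"
    and y_stab: "stable L (g - L *v y)"
    and l: "l \<le> length is"
  shows "firing_vector is l $ u \<le> y $ u"
  using l
proof (induction l arbitrary: u)
  case 0 thus ?case using y_nonneg by (simp add: firing_vector_def)
next
  case (Suc l)
  define v where "v = is ! l"
  have IH: "\<And>u. firing_vector is l $ u \<le> y $ u" using Suc by simp
  have "firing_vector is l $ v < y $ v"
  proof (rule ccontr)
    assume "\<not> ?thesis"
    hence eq: "firing_vector is l $ v = y $ v" using IH[of v] by simp
    have "L $ v $ v \<le> g $ v - (L *v firing_vector is l) $ v"
      using legal[of l] Suc.prems by (simp add: v_def fire_seq_firing_vector)
    also have "\<dots> \<le> g $ v - (L *v y) $ v"
      using Z_matrix_row_antimono[OF Z IH eq] by simp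
    finally show False using y_stab unfolding stable_def
      by (metis diff_less_eq not_less vector_minus_component)
  qed
  thus ?case using IH[of u]
    by (cases "u = v") (auto simp: firing_vector_Suc unitv_def v_def)
qed

theorem mainTheorem13:
  fixes L :: "int ^'n::finite ^'n" and c :: "int ^'n"
  assumes "nonsingular_M_matrix L"
    and "critical L c"
  shows "z_superstable L (D_L L - c)"
  unfolding z_superstable_def
proof (intro conjI allI impI)
  have Z: "Z_matrix L" using assms(1) unfolding nonsingular_M_matrix_def by simp
  obtain g "is" where g: "\<And>i. g $ i \<ge> L $ i $ i" and c: "c = fire_seq L g is (length is)"
    and legal: "\<And>l. l < length is \<Longrightarrow> fire_seq L g is l $ (is ! l) \<ge> L $ (is ! l) $ (is ! l)"
    using assms(2) unfolding critical_def by blast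
  have c_stable: "\<And>i. c $ i < L $ i $ i" using assms(2) unfolding critical_def stable_def by auto
  show "0 \<le> (D_L L - c) $ i" for i using c_stable[of i] by (simp add: D_L_def)
  fix z :: "int ^'n"
  assume z: "(\<forall>i. 0 \<le> z $ i) \<and> z \<noteq> 0"
  show "\<exists>i. (D_L L - c) $ i - (L *v z) $ i < 0"
  proof (rule ccontr)
    assume "\<not> ?thesis"
    hence cz: "c $ i + (L *v z) $ i < L $ i $ i" for i
      by (simp add: D_L_def not_less) (smt (verit))
    define x where "x = firing_vector is (length is)"
    define y where "y = x - z"
    have gLy: "g - L *v y = c + L *v z"
      by (simp add: y_def c fire_seq_firing_vector x_def matrix_vector_mult_diff_distrib)
    (* L y = g - c - L z >= g - (L_ii - 1) >= 1 *)
    have "(L *v y) $ i \<ge> 0" for i using gLy cz[of i] g[of i] by (simp add: vec_eq_iff) (smt (verit))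
    hence "y $ u \<ge> 0" for u using M_matrix_inverse_positive[OF assms(1)] by blast
    hence "x $ u \<le> y $ u" for u
      using least_action[OF Z legal, of y "length is"] gLy cz
      by (simp add: x_def stable_def)
    hence "z = 0" using z by (simp add: y_def vec_eq_iff order_antisym)
    with z show False by simp
  qed
qed

end
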